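(* Let $\mathcal{S}=\{s_1,\dots,s_M\}$ and let $\{S(\tau)\}_{\tau\ge 0}$ be independent $\mathcal{S}$-valued random variables with $\Pr\{S(\tau)=s_i\}=\pi_i(\tau)$. Fix a time $t$, a prediction window parameter $w\ge 0$, an integer $d\ge w+1$ with $t+w+1-d\ge 0$, and predicted distributions $\hat{\boldsymbol\pi}(t+k)$, $k=0,\dots,w$, satisfying $\|\hat{\boldsymbol\pi}(t+k)-\boldsymbol\pi(t+k)\|_{tv}\le e(k)$; put $e_w=\frac{1}{w+1}\sum_{k=0}^w e(k)$. Define $$\hat\pi^d_i=\frac1d\Big(\sum_{\tau=t+w+1-d}^{t-1}\mathbf 1_{[S(\tau)=s_i]}+\sum_{k=0}^{w}\hat\pi_i(t+k)\Big),$$ and let $\mathcal W_m$ be a set of $n_m\ge d$ time slots, all strictly smaller than $t+w+1-d$, with $\hat\pi^m_i=\frac1{n_m}\sum_{\tau\in\mathcal W_m}\mathbf 1_{[S(\tau)=s_i]}$. Suppose $\boldsymbol\pi(\tau)=\boldsymbol\pi_1$ for all $\tau\in\{t+w+1-d,\dots,t+w\}$ and $\boldsymbol\pi(\tau)=\boldsymbol\pi_2\neq\boldsymbol\pi_1$ for all $\tau\in\mathcal W_m$, and that $\max_i|\pi_{1i}-\pi_{2i}|>4(w+1)e_w/d$. Let $\delta\in(0,1)$, and let $\epsilon_d$ satisfy $0<\epsilon_d<\epsilon_0:=\tfrac12\max_i|\pi_{1i}-\pi_{2i}|-(w+1)e_w/d$ and $d>\ln\frac4\delta\cdot\frac{1}{2\epsilon_d^2}+w+1$.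 Then with probability at least $1-\delta$, $$\|\hat{\boldsymbol\pi}^d-\hat{\boldsymbol\pi}^m\|_{tv}>\epsilon_d,$$ i.e. the change test in step (i) of the ADE procedure fires at time $t$, so that ADE resets both windows to start at $t+w+1$ (the window $\mathcal W_m$ becomes empty).
   Context: For distributions $\boldsymbol\pi_1,\boldsymbol\pi_2$ on $\mathcal S$, $\|\boldsymbol\pi_1-\boldsymbol\pi_2\|_{tv}:=\sum_i|\pi_{1i}-\pi_{2i}|$. The ADE (average distribution estimate) procedure maintains a "detection window" consisting of the $d$ most recent samples, namely the observed states in slots $t+w+1-d,\dots,t-1$ together with the $w+1$ predicted distributions for slots $t,\dots,t+w$ (its estimate is $\hat{\boldsymbol\pi}^d$ above), and an earlier "memory window" $\mathcal W_m$ of observed states (estimate $\hat{\boldsymbol\pi}^m$). Its step (i) reads: if $|\mathcal W_m|\ge d$ and $\|\hat{\boldsymbol\pi}^d-\hat{\boldsymbol\pi}^m\|_{tv}>\epsilon_d$, declare a distribution change and restart both windows at slot $t+w+1$. *)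

theory Defs
  imports "HOL-Probability.Probability"
begin

text \<open>States: the finite type 'b (so the state space S = UNIV, M = CARD('b)).
  Distributions on states are functions 'b => real.\<close>

definition tv_dist :: "('b::finite \<Rightarrow> real) \<Rightarrow> ('b \<Rightarrow> real) \<Rightarrow> real" where
  "tv_dist p q = (\<Sum>s\<in>UNIV. \<bar>p s - q s\<bar>)"

definition is_distr :: "('b::finite \<Rightarrow> real) \<Rightarrow> bool" where
  "is_distr p \<longleftrightarrow> (\<forall>s. 0 \<le> p s) \<and> (\<Sum>s\<in>UNIV. p s) = 1"

definition state_distr :: "'a measure \<Rightarrow> (nat \<Rightarrow> 'a \<Rightarrow> 'b) \<Rightarrow> nat \<Rightarrow> 'b \<Rightarrow> real" where
  "state_distr P S tau s = measure P {\<omega> \<in> space P. S tau \<omega> = s}"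

definition det_est :: "(nat \<Rightarrow> 'a \<Rightarrow> 'b) \<Rightarrow> (nat \<Rightarrow> 'b \<Rightarrow> real) \<Rightarrow> nat \<Rightarrow> nat \<Rightarrow> nat \<Rightarrow> 'a \<Rightarrow> 'b \<Rightarrow> real" where
  "det_est S phat t w d \<omega> s =
     (1 / real d) * ((\<Sum>tau\<in>{t + w + 1 - d..<t}. (if S tau \<omega> = s then 1 else 0))
                     + (\<Sum>k\<le>w. phat (t + k) s))"

definition mem_est :: "(nat \<Rightarrow> 'a \<Rightarrow> 'b) \<Rightarrow> nat set \<Rightarrow> 'a \<Rightarrow> 'b \<Rightarrow> real" where
  "mem_est S Wm \<omega> s = (1 / real (card Wm)) * (\<Sum>tau\<in>Wm. (if S tau \<omega> = s then 1 else 0))"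

end

theory Submission
  imports Defs "HOL-Probability.Hoeffding"
begin

text \<open>Fix a state s maximising \<bar>pi1 s - pi2 s\<bar>. The total variation distance of two
  distributions is at least twice their difference at any single state, so it suffices that the
  s-coordinates of the two estimates differ by more than \<open>\<epsilon>d / 2\<close>. That difference equals
  \<open>(pi1 s - pi2 s) + (Z - \<EE>Z) + ((\<Sum>k\<le>w. phat (t + k) s) - (w + 1) pi1 s) / d\<close>, where Z is a
  sum of independent indicators of \<open>S \<tau> = s\<close> with weight 1/d on the observed slots of the
  detection window and \<open>-1 / card Wm\<close> on the memory window. The last term is at most
  \<open>(\<Sum>k\<le>w. e k) / d\<close>, and Hoeffding's inequality, with variance proxy at most 2/d, keeps
  \<open>\<bar>Z - \<EE>Z\<bar>\<close> below \<open>3/2 \<epsilon>d\<close> with probability at least \<open>1 - \<delta>\<close>.\<close>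

definition visits :: "('i \<Rightarrow> 'a \<Rightarrow> 'b) \<Rightarrow> 'i set \<Rightarrow> 'b \<Rightarrow> 'a \<Rightarrow> real" where
  "visits S A s \<omega> = (\<Sum>i\<in>A. if S i \<omega> = s then 1 else 0)"

lemma sum_visits: "(\<Sum>s\<in>UNIV. visits S A s \<omega>) = card A"
  for S :: "'i \<Rightarrow> 'a \<Rightarrow> 'b::finite"
  unfolding visits_def by (subst sum.swap) simp

lemma det_est_minus_mem_est:
  "det_est S phat t w d \<omega> s - mem_est S Wm \<omega> s
     = visits S {t + w + 1 - d..<t} s \<omega> / d - visits S Wm s \<omega> / card Wm
       + (\<Sum>k\<le>w. phat (t + k) s) / d"
  unfolding det_est_def mem_est_def visits_def by (simp add: add_divide_distrib)

lemma sum_det_est: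
  fixes S :: "nat \<Rightarrow> 'a \<Rightarrow> 'b::finite"
  assumes "w + 1 \<le> d" "d \<le> t + w + 1" and "\<And>k. k \<le> w \<Longrightarrow> is_distr (phat (t + k))"
  shows "(\<Sum>s\<in>UNIV. det_est S phat t w d \<omega> s) = 1"
proof -
  have "(\<Sum>s\<in>UNIV. \<Sum>k\<le>w. phat (t + k) s) = (\<Sum>k\<le>w. \<Sum>s\<in>UNIV. phat (t + k) s)"
    by (rule sum.swap)
  also have "\<dots> = w + 1"
    using assms(3) by (simp add: is_distr_def)
  finally have "(\<Sum>s\<in>UNIV. \<Sum>k\<le>w. phat (t + k) s) = w + 1" .
  moreover have "card {t + w + 1 - d..<t} + (w + 1) = d"
    using assms(1,2) by simp
  ultimately show ?thesis
    using assms(1) sum_visits[of S "{t + w + 1 - d..<t}" \<omega>]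
    by (simp add: det_est_def visits_def[symmetric] sum.distrib flip: sum_divide_distrib)
qed

lemma sum_mem_est:
  fixes S :: "nat \<Rightarrow> 'a \<Rightarrow> 'b::finite"
  assumes "finite Wm" "Wm \<noteq> {}"
  shows "(\<Sum>s\<in>UNIV. mem_est S Wm \<omega> s) = 1"
  using assms sum_visits[of S Wm \<omega>]
  by (simp add: mem_est_def visits_def[symmetric] flip: sum_divide_distrib)

lemma abs_diff_le_tv_dist: "\<bar>p s - q s\<bar> \<le> tv_dist p q"
  unfolding tv_dist_def by (rule member_le_sum) auto

lemma tv_dist_ge_twice_abs_diff:
  fixes p q :: "'b::finite \<Rightarrow> real"
  assumes "(\<Sum>s\<in>UNIV. p s) = (\<Sum>s\<in>UNIV. q s)"
  shows "2 * \<bar>p s - q s\<bar> \<le> tv_dist p q"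
proof -
  have split: "(\<Sum>s'\<in>UNIV. f s') = f s + (\<Sum>s'\<in>UNIV - {s}. f s')" for f :: "'b \<Rightarrow> real"
    by (simp add: sum.remove)
  have "\<bar>p s - q s\<bar> = \<bar>\<Sum>s'\<in>UNIV - {s}. p s' - q s'\<bar>"
    using assms split[of p] split[of q] by (simp add: sum_subtractf)
  also have "\<dots> \<le> (\<Sum>s'\<in>UNIV - {s}. \<bar>p s' - q s'\<bar>)"
    by (rule sum_abs)
  finally show ?thesis
    unfolding tv_dist_def using split[of "\<lambda>s'. \<bar>p s' - q s'\<bar>"] by simp
qed

lemma abs_sum_diff_le_sum_tv_dist:
  fixes p :: "'k \<Rightarrow> 'b::finite \<Rightarrow> real" and q :: "'b \<Rightarrow> real"
  assumes "\<And>k. k \<in> K \<Longrightarrow> tv_dist (p k) q \<le> e k"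
  shows "\<bar>(\<Sum>k\<in>K. p k s) - real (card K) * q s\<bar> \<le> (\<Sum>k\<in>K. e k)"
proof -
  have "\<bar>(\<Sum>k\<in>K. p k s) - real (card K) * q s\<bar> = \<bar>\<Sum>k\<in>K. p k s - q s\<bar>"
    by (simp add: sum_subtractf)
  also have "\<dots> \<le> (\<Sum>k\<in>K. \<bar>p k s - q s\<bar>)"
    by (rule sum_abs)
  also have "\<dots> \<le> (\<Sum>k\<in>K. e k)"
    by (intro sum_mono order_trans[OF abs_diff_le_tv_dist assms])
  finally show ?thesis .
qed

lemma half_tv_dist_det_est_mem_est_ge:
  fixes S :: "nat \<Rightarrow> 'a \<Rightarrow> 'b::finite" and phat :: "nat \<Rightarrow> 'b \<Rightarrow> real"
    and t w d :: nat and p q :: real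
  defines "L \<equiv> {t + w + 1 - d..<t}"
  assumes "w + 1 \<le> d" "d \<le> t + w + 1" and "\<And>k. k \<le> w \<Longrightarrow> is_distr (phat (t + k))"
    and "finite Wm" "Wm \<noteq> {}"
  shows "\<bar>p - q\<bar>
           - \<bar>visits S L s \<omega> / d - visits S Wm s \<omega> / card Wm - (card L * p / d - q)\<bar>
           - \<bar>(\<Sum>k\<le>w. phat (t + k) s) - (w + 1) * p\<bar> / d
         \<le> tv_dist (det_est S phat t w d \<omega>) (mem_est S Wm \<omega>) / 2"
proof -
  let ?Z = "visits S L s \<omega> / d - visits S Wm s \<omega> / card Wm - (card L * p / d - q)"
  let ?C = "(\<Sum>k\<le>w. phat (t + k) s) - (w + 1) * p"
  have "real (card L) = real d - (w + 1)"
    using assms(2,3) by (simp add: L_def)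
  then have "det_est S phat t w d \<omega> s - mem_est S Wm \<omega> s = (p - q) + ?Z + ?C / d"
    using assms(2) by (simp add: det_est_minus_mem_est L_def field_simps)
  moreover have "\<bar>x\<bar> - \<bar>y\<bar> - \<bar>z\<bar> \<le> \<bar>x + y + z\<bar>" for x y z :: real
    by arith
  ultimately have lower: "\<bar>p - q\<bar> - \<bar>?Z\<bar> - \<bar>?C\<bar> / d
      \<le> \<bar>det_est S phat t w d \<omega> s - mem_est S Wm \<omega> s\<bar>"
    by (metis abs_divide abs_of_nat)
  have "2 * \<bar>det_est S phat t w d \<omega> s - mem_est S Wm \<omega> s\<bar>
      \<le> tv_dist (det_est S phat t w d \<omega>) (mem_est S Wm \<omega>)"
    using sum_det_est[of w d t phat S \<omega>] sum_mem_est[OF assms(5,6), of S \<omega>] assms(2-4)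
    by (intro tv_dist_ge_twice_abs_diff) simp
  then have "\<bar>det_est S phat t w d \<omega> s - mem_est S Wm \<omega> s\<bar>
      \<le> tv_dist (det_est S phat t w d \<omega>) (mem_est S Wm \<omega>) / 2"
    by simp
  with lower show ?thesis
    by (rule order_trans)
qed

lemma (in prob_space) expectation_state_indicator:
  "expectation (\<lambda>\<omega>. if S i \<omega> = s then 1 else 0) = state_distr M S i s"
proof -
  have "expectation (\<lambda>\<omega>. if S i \<omega> = s then 1 else 0)
      = expectation (indicator {\<omega> \<in> space M. S i \<omega> = s})"
    by (rule Bochner_Integration.integral_cong) auto
  also have "\<dots> = state_distr M S i s"
    unfolding state_distr_def by (simp add: Int_absorb2 Collect_subset)
  finally show ?thesis .
qed

lemma (in prob_space) visits_difference_Hoeffding: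
  fixes S :: "nat \<Rightarrow> 'a \<Rightarrow> 'b" and a b \<epsilon> :: real
  assumes indep: "indep_vars (\<lambda>_. count_space UNIV) S (A \<union> B)"
    and fin_A: "finite A" and fin_B: "finite B" and disj: "A \<inter> B = {}" and "A \<union> B \<noteq> {}"
    and a: "0 < a" and b: "0 < b" and "0 \<le> \<epsilon>"
  shows "prob {\<omega> \<in> space M. \<epsilon> \<le> \<bar>visits S A s \<omega> / a - visits S B s \<omega> / b
             - ((\<Sum>i\<in>A. state_distr M S i s) / a - (\<Sum>i\<in>B. state_distr M S i s) / b)\<bar>}
         \<le> 2 * exp (-2 * \<epsilon>\<^sup>2 / (card A / a\<^sup>2 + card B / b\<^sup>2))"
proof -
  define c where "c i = (if i \<in> A then 1 / a else - 1 / b)" for i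
  define X where "X i \<omega> = c i * (if S i \<omega> = s then 1 else 0)" for i \<omega>
  define lo where "lo i = (if i \<in> A then 0 else - 1 / b)" for i
  define hi where "hi i = (if i \<in> A then 1 / a else 0)" for i
  have "indep_vars (\<lambda>_. borel) X (A \<union> B)"
    unfolding X_def
    by (rule indep_vars_compose2[OF indep, where Y = "\<lambda>i x. c i * (if x = s then 1 else 0)"]) auto
  then interpret Hoeffding_ineq M "A \<union> B" X lo hi "\<Sum>i\<in>A \<union> B. expectation (X i)"
  proof unfold_locales
    fix i assume "i \<in> A \<union> B"
    show "AE \<omega> in M. X i \<omega> \<in> {lo i..hi i}"
      using a b by (intro AE_I2) (auto simp: X_def c_def lo_def hi_def)
  qed (use fin_A fin_B in simp_all)
  have split: "(\<Sum>i\<in>A \<union> B. f i) = (\<Sum>i\<in>A. f i) + (\<Sum>i\<in>B. f i)" for f :: "nat \<Rightarrow> real"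
    using fin_A fin_B disj by (rule sum.union_disjoint)
  have weighted: "(\<Sum>i\<in>A \<union> B. c i * f i) = (\<Sum>i\<in>A. f i) / a - (\<Sum>i\<in>B. f i) / b" for f
  proof -
    have "(\<Sum>i\<in>A. c i * f i) = (\<Sum>i\<in>A. f i / a)"
      by (simp add: c_def)
    moreover have "(\<Sum>i\<in>B. c i * f i) = (\<Sum>i\<in>B. - f i / b)"
      by (rule sum.cong) (use disj in \<open>auto simp: c_def\<close>)
    ultimately show ?thesis
      by (simp add: split sum_divide_distrib sum_negf)
  qed
  have "(\<Sum>i\<in>A \<union> B. X i \<omega>) = visits S A s \<omega> / a - visits S B s \<omega> / b" for \<omega>
    unfolding X_def visits_def by (rule weighted)
  moreover have "(\<Sum>i\<in>A \<union> B. expectation (X i))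
      = (\<Sum>i\<in>A. state_distr M S i s) / a - (\<Sum>i\<in>B. state_distr M S i s) / b"
    unfolding X_def by (simp add: expectation_state_indicator weighted)
  moreover have "(\<Sum>i\<in>A \<union> B. (hi i - lo i)\<^sup>2) = card A / a\<^sup>2 + card B / b\<^sup>2"
  proof -
    have "(\<Sum>i\<in>B. (hi i - lo i)\<^sup>2) = (\<Sum>i\<in>B. 1 / b\<^sup>2)"
      by (rule sum.cong) (use disj in \<open>auto simp: hi_def lo_def power_divide\<close>)
    then show ?thesis
      by (simp add: split hi_def lo_def power_divide)
  qed
  moreover have "0 < card A / a\<^sup>2 + card B / b\<^sup>2"
  proof -
    have "0 < card A \<or> 0 < card B"
      using \<open>A \<union> B \<noteq> {}\<close> fin_A fin_B by (auto simp: card_gt_0_iff)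
    then show ?thesis
      using a b by (auto intro: add_pos_nonneg add_nonneg_pos)
  qed
  ultimately show ?thesis
    using Hoeffding_ineq_abs_ge[OF \<open>0 \<le> \<epsilon>\<close>] by simp
qed

lemma (in prob_space) visits_difference_deviation:
  fixes S :: "nat \<Rightarrow> 'a \<Rightarrow> 'b" and a \<epsilon> :: real
  assumes indep: "indep_vars (\<lambda>_. count_space UNIV) S (A \<union> B)"
    and "finite A" "finite B" "A \<inter> B = {}" "B \<noteq> {}"
    and "0 < a" "card A \<le> a" "a \<le> card B" and "0 \<le> \<epsilon>"
  shows "prob {\<omega> \<in> space M. \<epsilon> \<le> \<bar>visits S A s \<omega> / a - visits S B s \<omega> / card B
             - ((\<Sum>i\<in>A. state_distr M S i s) / a - (\<Sum>i\<in>B. state_distr M S i s) / card B)\<bar>}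
         \<le> 2 * exp (- (a * \<epsilon>\<^sup>2))"
proof -
  let ?V = "card A / a\<^sup>2 + card B / (real (card B))\<^sup>2"
  have "0 < card B"
    using assms(3,5) by (simp add: card_gt_0_iff)
  have "card A / a\<^sup>2 \<le> 1 / a"
    using assms(6,7) by (simp add: power2_eq_square divide_le_eq)
  moreover have "card B / (real (card B))\<^sup>2 \<le> 1 / a"
    using \<open>0 < card B\<close> assms(6,8) by (simp add: power2_eq_square frac_le)
  moreover have "0 < card B / (real (card B))\<^sup>2"
    using \<open>0 < card B\<close> by simp
  ultimately have "0 < ?V" "?V \<le> 2 / a"
    by (auto intro: add_nonneg_pos)
  then have "2 * \<epsilon>\<^sup>2 / (2 / a) \<le> 2 * \<epsilon>\<^sup>2 / ?V"
    using \<open>0 < a\<close> by (intro divide_left_mono) auto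
  then have "-2 * \<epsilon>\<^sup>2 / ?V \<le> - (a * \<epsilon>\<^sup>2)"
    by (simp add: mult.commute)
  then have "2 * exp (-2 * \<epsilon>\<^sup>2 / ?V) \<le> 2 * exp (- (a * \<epsilon>\<^sup>2))"
    by simp
  moreover have "A \<union> B \<noteq> {}" "(0::real) < card B"
    using assms(5) \<open>0 < card B\<close> by auto
  ultimately show ?thesis
    using visits_difference_Hoeffding[OF indep assms(2-4), where s = s and a = a and b = "card B"]
      \<open>0 < a\<close> \<open>0 \<le> \<epsilon>\<close> by (meson order_trans)
qed

lemma (in prob_space) window_frequency_deviation:
  fixes S :: "nat \<Rightarrow> 'a \<Rightarrow> 'b" and t w d :: nat and p q \<epsilon> :: real
  defines "L \<equiv> {t + w + 1 - d..<t}"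
  assumes indep: "indep_vars (\<lambda>_. count_space UNIV) S UNIV"
    and "0 < d" "finite Wm" "d \<le> card Wm" and "\<And>\<tau>. \<tau> \<in> Wm \<Longrightarrow> \<tau> < t + w + 1 - d"
    and "\<And>\<tau>. \<tau> \<in> L \<Longrightarrow> state_distr M S \<tau> s = p"
    and "\<And>\<tau>. \<tau> \<in> Wm \<Longrightarrow> state_distr M S \<tau> s = q"
    and "0 \<le> \<epsilon>"
  shows "prob {\<omega> \<in> space M.
           \<epsilon> \<le> \<bar>visits S L s \<omega> / d - visits S Wm s \<omega> / card Wm - (card L * p / d - q)\<bar>}
         \<le> 2 * exp (- (d * \<epsilon>\<^sup>2))"
proof -
  have "Wm \<noteq> {}"
    using assms(3,5) by auto
  have "L \<inter> Wm = {}"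
    using assms(6) by (force simp: L_def)
  have "real (card L) \<le> d"
    by (simp add: L_def)
  moreover have "(\<Sum>\<tau>\<in>L. state_distr M S \<tau> s) / d - (\<Sum>\<tau>\<in>Wm. state_distr M S \<tau> s) / card Wm
      = card L * p / d - q"
    using assms(7,8) \<open>Wm \<noteq> {}\<close> assms(4) by simp
  ultimately show ?thesis
    using visits_difference_deviation[OF indep_vars_subset[OF indep subset_UNIV] _ assms(4)
        \<open>L \<inter> Wm = {}\<close> \<open>Wm \<noteq> {}\<close>, where a = d and s = s and \<epsilon> = \<epsilon>] assms(3,5,9)
    by (simp add: L_def)
qed

lemma two_exp_le_of_ln_le:
  fixes \<delta> x :: real
  assumes "0 < \<delta>" "ln (2 / \<delta>) \<le> x"
  shows "2 * exp (- x) \<le> \<delta>"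
proof -
  have "exp (- x) \<le> exp (- ln (2 / \<delta>))"
    using assms(2) by simp
  also have "\<dots> = \<delta> / 2"
    using assms(1) by (simp add: exp_minus)
  finally show ?thesis by simp
qed

lemma sample_size_bound:
  fixes \<delta> \<epsilon> c :: real and d :: nat
  assumes "0 < \<delta>" "0 < \<epsilon>" "0 \<le> c" "ln (4 / \<delta>) * (1 / (2 * \<epsilon>\<^sup>2)) + c < d"
  shows "ln (2 / \<delta>) \<le> d * (3 / 2 * \<epsilon>)\<^sup>2"
proof -
  have "ln (2 / \<delta>) \<le> ln (4 / \<delta>)"
    using assms(1) by (simp add: divide_right_mono)
  also have "\<dots> \<le> 2 * \<epsilon>\<^sup>2 * d"
  proof -
    have "ln (4 / \<delta>) * (1 / (2 * \<epsilon>\<^sup>2)) \<le> d"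
      using assms(3,4) by linarith
    then show ?thesis
      using assms(2) by (simp add: field_simps)
  qed
  also have "\<dots> \<le> 9 / 4 * \<epsilon>\<^sup>2 * d"
    by (intro mult_right_mono) auto
  also have "\<dots> = d * (3 / 2 * \<epsilon>)\<^sup>2"
    by (simp add: power2_eq_square)
  finally show ?thesis .
qed

lemma (in prob_space) prob_ge_of_compl_subset:
  assumes "A \<in> events" "B \<in> events" "space M - B \<subseteq> A" "prob B \<le> \<delta>"
  shows "1 - \<delta> \<le> prob A"
proof -
  have "1 - \<delta> \<le> prob (space M - B)"
    using assms(2,4) by (simp add: prob_compl)
  also have "\<dots> \<le> prob A"
    using assms(3,1) by (rule finite_measure_mono)
  finally show ?thesis .
qed

theorem lemma1:
  fixes P :: "'a measure"
    and S :: "nat \<Rightarrow> 'a \<Rightarrow> 'b::finite"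
    and phat :: "nat \<Rightarrow> 'b \<Rightarrow> real"
    and e :: "nat \<Rightarrow> real"
    and t w d :: nat
    and Wm :: "nat set"
    and pi1 pi2 :: "'b \<Rightarrow> real"
    and \<delta> \<epsilon>d :: real
  assumes "prob_space P"
    and "\<And>tau. S tau \<in> measurable P (count_space UNIV)"
    and "prob_space.indep_vars P (\<lambda>_. count_space UNIV) S UNIV"
    and "d \<ge> w + 1" and "d \<le> t + w + 1"
    and "\<And>k. k \<le> w \<Longrightarrow> is_distr (phat (t + k))"
    and "\<And>k. k \<le> w \<Longrightarrow> tv_dist (phat (t + k)) (state_distr P S (t + k)) \<le> e k"
    and "finite Wm" and "card Wm \<ge> d"
    and "\<And>tau. tau \<in> Wm \<Longrightarrow> tau < t + w + 1 - d"
    and "\<And>tau. tau \<in> {t + w + 1 - d..t + w} \<Longrightarrow> state_distr P S tau = pi1"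
    and "\<And>tau. tau \<in> Wm \<Longrightarrow> state_distr P S tau = pi2"
    and "pi2 \<noteq> pi1"
    and "Max (range (\<lambda>s. \<bar>pi1 s - pi2 s\<bar>))
           > 4 * (w + 1) * ((\<Sum>k\<le>w. e k) / (w + 1)) / d"
    and "0 < \<delta>" and "\<delta> < 1"
    and "0 < \<epsilon>d"
    and "\<epsilon>d < Max (range (\<lambda>s. \<bar>pi1 s - pi2 s\<bar>)) / 2
                 - (w + 1) * ((\<Sum>k\<le>w. e k) / (w + 1)) / d"
    and "real d > ln (4 / \<delta>) * (1 / (2 * \<epsilon>d ^ 2)) + (w + 1)"
  shows "prob_space.prob P
           {\<omega> \<in> space P. tv_dist (det_est S phat t w d \<omega>) (mem_est S Wm \<omega>) > \<epsilon>d}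
         \<ge> 1 - \<delta>"
proof -
  interpret prob_space P by fact
  note [measurable] = assms(2)
  define L where "L = {t + w + 1 - d..<t}"
  define E where "E = (\<Sum>k\<le>w. e k) / d"
  have "Max (range (\<lambda>s. \<bar>pi1 s - pi2 s\<bar>)) \<in> range (\<lambda>s. \<bar>pi1 s - pi2 s\<bar>)"
    by (rule Max_in) auto
  then obtain s where "Max (range (\<lambda>s. \<bar>pi1 s - pi2 s\<bar>)) = \<bar>pi1 s - pi2 s\<bar>"
    by blast
  then have gap: "\<epsilon>d < \<bar>pi1 s - pi2 s\<bar> / 2 - E"
    using assms(18) by (simp add: E_def)
  define dev where "dev \<omega> = \<bar>visits S L s \<omega> / d - visits S Wm s \<omega> / card Wm - (card L * pi1 s / d - pi2 s)\<bar>"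
    for \<omega>
  have "tv_dist (phat (t + k)) pi1 \<le> e k" if "k \<le> w" for k
    using assms(7)[OF that] assms(11)[of "t + k"] assms(4) that by simp
  then have "\<bar>(\<Sum>k\<le>w. phat (t + k) s) - (w + 1) * pi1 s\<bar> \<le> (\<Sum>k\<le>w. e k)"
    using abs_sum_diff_le_sum_tv_dist[where K = "{..w}" and p = "\<lambda>k. phat (t + k)" and s = s]
    by simp
  then have prediction: "\<bar>(\<Sum>k\<le>w. phat (t + k) s) - (w + 1) * pi1 s\<bar> / d \<le> E"
    unfolding E_def by (simp add: divide_right_mono)
  then have "0 \<le> E"
    by (rule order_trans[rotated]) simp
  have "prob {\<omega> \<in> space P. 3 / 2 * \<epsilon>d \<le> dev \<omega>} \<le> 2 * exp (- (d * (3 / 2 * \<epsilon>d)\<^sup>2))"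
    unfolding dev_def L_def using assms(4,17)
    by (intro window_frequency_deviation assms(3,8,9,10)) (auto simp: assms(11,12))
  also have "\<dots> \<le> \<delta>"
    using assms(15,17,19) by (intro two_exp_le_of_ln_le sample_size_bound[where c = "w + 1"]) auto
  finally have bad: "prob {\<omega> \<in> space P. 3 / 2 * \<epsilon>d \<le> dev \<omega>} \<le> \<delta>" .
  have "\<epsilon>d < tv_dist (det_est S phat t w d \<omega>) (mem_est S Wm \<omega>)"
    if "dev \<omega> < 3 / 2 * \<epsilon>d" for \<omega>
  proof -
    have "\<bar>pi1 s - pi2 s\<bar> - dev \<omega> - \<bar>(\<Sum>k\<le>w. phat (t + k) s) - (w + 1) * pi1 s\<bar> / d
        \<le> tv_dist (det_est S phat t w d \<omega>) (mem_est S Wm \<omega>) / 2"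
      unfolding dev_def L_def using assms(4,9)
      by (intro half_tv_dist_det_est_mem_est_ge[where phat = phat and t = t] assms(5,6,8)) auto
    then show ?thesis
      using that gap prediction \<open>0 \<le> E\<close> by argo
  qed
  then show ?thesis
    unfolding tv_dist_def det_est_def mem_est_def dev_def visits_def
    by (intro prob_ge_of_compl_subset[OF _ _ _ bad[unfolded dev_def visits_def]]) (auto, measurable)
qed

end
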